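(* Let $M$ be a manifold of dimension $m$, and let $X_p$ and $X_s$ be two commuting vector fields on $M$ possessing $m-2$ independent common integrals of motion $H_1,\dots,H_{m-2}$. Let $h(x)=E\,x^2+F\,x+G$ be a quadratic polynomial in $x$ whose coefficients $E,F,G$ are functions on $M$ satisfying the Kowalewski separability conditions \[ E F_s - F E_s = E G_p - G E_p, \qquad E G_s - G E_s = F G_p - G F_p , \] where $E_p=X_p(E)$, $E_s=X_s(E)$, and similarly for $F$ and $G$. Then the roots $x_1,x_2$ of the equation $E x^2+F x+G=0$ are separating coordinates for $X_p$ and $X_s$.
   Context: "Separating coordinates" is meant in the following sense: in the coordinate system $(x_1,x_2,H_1,\dots,H_{m-2})$ (adapted to the two-dimensional foliation spanned by $X_p,X_s$), there exist functions $\psi_1,\psi_2$ such that \[ X_s + x_1 X_p = \psi_1\,\frac{\partial}{\partial x_1},\qquad X_s + x_2 X_p = \psi_2\,\frac{\partial}{\partial x_2}, \] with $\psi_1$ independent of $x_2$ and $\psi_2$ independent of $x_1$ (i.e. $\psi_1=\psi_1(x_1,H_1,\dots,H_{m-2})$, $\psi_2=\psi_2(x_2,H_1,\dots,H_{m-2})$). *)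

theory Defs
  imports "HOL-Analysis.Analysis"
begin

text \<open>Local model: the manifold M of dimension m is represented (locally) by an open
set U in a Euclidean space of dimension m = DIM('a).\<close>

fun Ck_on :: "nat \<Rightarrow> 'a::euclidean_space set \<Rightarrow> ('a \<Rightarrow> 'b::real_normed_vector) \<Rightarrow> bool" where
  "Ck_on 0 U f = continuous_on U f"
| "Ck_on (Suc k) U f =
     ((\<forall>x\<in>U. f differentiable (at x)) \<and>
      (\<forall>v. Ck_on k U (\<lambda>x. frechet_derivative f (at x) v)))"

definition smooth_on :: "'a::euclidean_space set \<Rightarrow> ('a \<Rightarrow> 'b::real_normed_vector) \<Rightarrow> bool" where
  "smooth_on U f \<longleftrightarrow> (\<forall>k. Ck_on k U f)"

definition vf_apply :: "('a::euclidean_space \<Rightarrow> 'a) \<Rightarrow> ('a \<Rightarrow> real) \<Rightarrow> 'a \<Rightarrow> real" where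
  "vf_apply X f q = frechet_derivative f (at q) (X q)"

definition commuting_on :: "'a::euclidean_space set \<Rightarrow> ('a \<Rightarrow> 'a) \<Rightarrow> ('a \<Rightarrow> 'a) \<Rightarrow> bool" where
  "commuting_on U X Y \<longleftrightarrow>
     (\<forall>q\<in>U. frechet_derivative Y (at q) (X q) - frechet_derivative X (at q) (Y q) = 0)"

definition indep_differentials :: "(nat \<Rightarrow> 'a::euclidean_space \<Rightarrow> real) \<Rightarrow> nat \<Rightarrow> 'a \<Rightarrow> bool" where
  "indep_differentials f n q \<longleftrightarrow>
     (\<forall>c::nat \<Rightarrow> real. (\<forall>v. (\<Sum>j<n. c j * frechet_derivative (f j) (at q) v) = 0)
        \<longrightarrow> (\<forall>j<n. c j = 0))"

text \<open>The coordinate system (x1, x2, H_1, ..., H_{m-2}) as an indexed family of functions: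
  index 0 is x1, index 1 is x2, index k+2 is H k.\<close>
definition coords :: "('a \<Rightarrow> real) \<Rightarrow> ('a \<Rightarrow> real) \<Rightarrow> (nat \<Rightarrow> 'a \<Rightarrow> real) \<Rightarrow> nat \<Rightarrow> 'a \<Rightarrow> real" where
  "coords x1 x2 H j = (if j = 0 then x1 else if j = 1 then x2 else H (j - 2))"

definition coord_vec :: "(nat \<Rightarrow> 'a::euclidean_space \<Rightarrow> real) \<Rightarrow> nat \<Rightarrow> nat \<Rightarrow> 'a \<Rightarrow> 'a" where
  "coord_vec y n i q =
     (THE v. \<forall>j<n. frechet_derivative (y j) (at q) v = (if j = i then 1 else 0))"

end

theory Submission
  imports Defs
begin

(* By Vieta, F = -E (x1 + x2) and G = E x1 x2, and the Kowalewski conditions then say exactly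
   that X_s x1 = -x2 X_p x1 and X_s x2 = -x1 X_p x2.  Hence X_s + x1 X_p annihilates x2 and every
   H_k, so it is psi1 d/dx1 with psi1 = (x1 - x2) X_p x1.  Because X_p and X_s commute, psi1 has
   zero derivative along X_s + x2 X_p, which spans the common kernel of dx1 and the dH_k; so psi1
   is constant along the x2-coordinate lines, which the inverse function theorem realises locally
   as paths.  The root x2 is treated symmetrically. *)

abbreviation Df :: "('a::real_normed_vector \<Rightarrow> 'b::real_normed_vector) \<Rightarrow> 'a \<Rightarrow> 'a \<Rightarrow> 'b" where
  "Df f x \<equiv> frechet_derivative f (at x)"

lemma Ck_on_2_D:
  assumes "Ck_on 2 U f"
  shows "\<forall>x\<in>U. f differentiable (at x)"
    and "\<forall>x\<in>U. (\<lambda>x. Df f x u) differentiable (at x)"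
    and "continuous_on U (\<lambda>x. Df (\<lambda>x. Df f x u) x v)"
  using assms by (simp_all add: numeral_2_eq_2)

lemma Ck_on_1_D:
  assumes "Ck_on 1 U f"
  shows "\<forall>x\<in>U. f differentiable (at x)" and "continuous_on U (\<lambda>x. Df f x v)"
  using assms by simp_all

lemma Ck_on_2_imp_Ck_on_1:
  assumes "Ck_on 2 U f"
  shows "Ck_on 1 U f"
  using assms
  by (auto simp: numeral_2_eq_2
      intro!: differentiable_imp_continuous_on differentiable_at_imp_differentiable_on)

lemma has_derivative_along_line:
  fixes F :: "'a::real_normed_vector \<Rightarrow> 'b::real_normed_vector"
  assumes dF: "(F has_derivative F') (at (a + t *\<^sub>R u))"
  shows "((\<lambda>s. F (a + s *\<^sub>R u)) has_derivative (\<lambda>d. d *\<^sub>R F' u)) (at t within S)"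
proof -
  have "((\<lambda>s. a + s *\<^sub>R u) has_derivative (\<lambda>d. d *\<^sub>R u)) (at t within S)"
    by (auto intro!: derivative_eq_intros)
  from has_derivative_compose[OF this dF] show ?thesis
    using has_derivative_linear[OF dF] by (simp add: linear_cmul)
qed

lemma mean_value_along_line:
  fixes F :: "'a::real_normed_vector \<Rightarrow> real"
  assumes h: "h > 0" and F: "\<And>s. s \<in> {0..h} \<Longrightarrow> (F has_derivative F' s) (at (a + s *\<^sub>R u))"
  shows "\<exists>s\<in>{0<..<h}. F (a + h *\<^sub>R u) - F a = h * F' s u"
proof -
  have "((\<lambda>t. F (a + t *\<^sub>R u)) has_derivative (\<lambda>d. d * F' s u)) (at s within {0..h})"
    if "0 \<le> s" "s \<le> h" for s
    using has_derivative_along_line[OF F[of s]] that by simp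
  from mvt_simple[OF h this] show ?thesis
    by simp
qed

lemma second_difference_mean_value:
  fixes f :: "'a::euclidean_space \<Rightarrow> real"
  assumes C2: "Ck_on 2 U f" and h: "h > 0"
    and square: "\<And>s t. s \<in> {0..h} \<Longrightarrow> t \<in> {0..h} \<Longrightarrow> q + s *\<^sub>R u + t *\<^sub>R v \<in> U"
  obtains s t where "s \<in> {0..h}" "t \<in> {0..h}"
    "f (q + h *\<^sub>R u + h *\<^sub>R v) - f (q + h *\<^sub>R u) - f (q + h *\<^sub>R v) + f q
       = h\<^sup>2 * Df (\<lambda>x. Df f x u) (q + s *\<^sub>R u + t *\<^sub>R v) v"
proof -
  define g where "g = (\<lambda>x. Df f x u)"
  have df: "(f has_derivative Df f (q + s *\<^sub>R u + t *\<^sub>R v)) (at (q + s *\<^sub>R u + t *\<^sub>R v))"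
    and dg: "(g has_derivative Df g (q + s *\<^sub>R u + t *\<^sub>R v)) (at (q + s *\<^sub>R u + t *\<^sub>R v))"
    if "s \<in> {0..h}" "t \<in> {0..h}" for s t
    using square[OF that] Ck_on_2_D(1,2)[OF C2] frechet_derivative_works unfolding g_def by blast+
  have "((\<lambda>x. f (x + h *\<^sub>R v) - f x) has_derivative
      (\<lambda>w. Df f (q + s *\<^sub>R u + h *\<^sub>R v) w - Df f (q + s *\<^sub>R u) w)) (at (q + s *\<^sub>R u))"
    if s: "s \<in> {0..h}" for s
  proof -
    have "((\<lambda>x. x + h *\<^sub>R v) has_derivative (\<lambda>w. w)) (at (q + s *\<^sub>R u))"
      by (auto intro!: derivative_eq_intros)
    from has_derivative_compose[OF this df[OF s, of h]] h
    have "((\<lambda>x. f (x + h *\<^sub>R v)) has_derivative Df f (q + s *\<^sub>R u + h *\<^sub>R v)) (at (q + s *\<^sub>R u))"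
      by simp
    then show ?thesis
      using df[OF s, of 0] h by (intro has_derivative_diff) simp_all
  qed
  from mean_value_along_line[OF h this]
  obtain s where s: "s \<in> {0<..<h}"
    and s_eq: "(f (q + h *\<^sub>R u + h *\<^sub>R v) - f (q + h *\<^sub>R u)) - (f (q + h *\<^sub>R v) - f q)
                 = h * (g (q + s *\<^sub>R u + h *\<^sub>R v) - g (q + s *\<^sub>R u))"
    by (auto simp: g_def)
  from s have "s \<in> {0..h}"
    by simp
  from mean_value_along_line[OF h dg[OF this]]
  obtain t where t: "t \<in> {0<..<h}"
    and t_eq: "g (q + s *\<^sub>R u + h *\<^sub>R v) - g (q + s *\<^sub>R u) = h * Df g (q + s *\<^sub>R u + t *\<^sub>R v) v"
    by auto
  have "f (q + h *\<^sub>R u + h *\<^sub>R v) - f (q + h *\<^sub>R u) - f (q + h *\<^sub>R v) + f q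
      = h * (g (q + s *\<^sub>R u + h *\<^sub>R v) - g (q + s *\<^sub>R u))"
    using s_eq by linarith
  also have "\<dots> = h\<^sup>2 * Df g (q + s *\<^sub>R u + t *\<^sub>R v) v"
    using t_eq by (simp add: power2_eq_square)
  finally have "f (q + h *\<^sub>R u + h *\<^sub>R v) - f (q + h *\<^sub>R u) - f (q + h *\<^sub>R v) + f q
      = h\<^sup>2 * Df (\<lambda>x. Df f x u) (q + s *\<^sub>R u + t *\<^sub>R v) v"
    by (simp add: g_def)
  moreover have "s \<in> {0..h}" "t \<in> {0..h}"
    using s t by auto
  ultimately show ?thesis
    using that by blast
qed

lemma mixed_derivatives_meet_in_ball:
  fixes f :: "'a::euclidean_space \<Rightarrow> real"
  assumes C2: "Ck_on 2 U f" and d: "d > 0" "ball q d \<subseteq> U"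
  obtains z1 z2 where "z1 \<in> ball q d" "z2 \<in> ball q d"
    "Df (\<lambda>x. Df f x u) z1 v = Df (\<lambda>x. Df f x v) z2 u"
proof -
  define h where "h = d / (2 * (norm u + norm v + 1))"
  have pos: "norm u + norm v + 1 > 0"
    using norm_ge_zero[of u] norm_ge_zero[of v] by linarith
  have h: "h > 0"
    unfolding h_def using d pos by simp
  have "h * (norm u + norm v) \<le> h * (norm u + norm v + 1)"
    using h by simp
  also have "\<dots> = d / 2"
    unfolding h_def using pos by (simp add: field_simps)
  finally have hd: "h * (norm u + norm v) < d"
    using d by simp
  have near: "q + s *\<^sub>R a + t *\<^sub>R b \<in> ball q d"
    if "s \<in> {0..h}" "t \<in> {0..h}" "norm a + norm b = norm u + norm v" for s t a b
  proof -
    have "norm (s *\<^sub>R a + t *\<^sub>R b) \<le> s * norm a + t * norm b"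
      using that norm_triangle_ineq[of "s *\<^sub>R a" "t *\<^sub>R b"] by auto
    also have "\<dots> \<le> h * (norm u + norm v)"
      using that by (metis atLeastAtMost_iff distrib_left add_mono mult_right_mono norm_ge_zero)
    finally have "dist (q + s *\<^sub>R a + t *\<^sub>R b) q < d"
      using hd by (simp add: dist_norm add.assoc)
    then show ?thesis
      by (simp add: dist_commute)
  qed
  have square_uv: "q + s *\<^sub>R u + t *\<^sub>R v \<in> U" and square_vu: "q + s *\<^sub>R v + t *\<^sub>R u \<in> U"
    if "s \<in> {0..h}" "t \<in> {0..h}" for s t
    using near[OF that refl] near[OF that add.commute] d(2) by blast+
  obtain s1 t1 where st1: "s1 \<in> {0..h}" "t1 \<in> {0..h}"
    and eq1: "f (q + h *\<^sub>R u + h *\<^sub>R v) - f (q + h *\<^sub>R u) - f (q + h *\<^sub>R v) + f q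
                = h\<^sup>2 * Df (\<lambda>x. Df f x u) (q + s1 *\<^sub>R u + t1 *\<^sub>R v) v"
    by (rule second_difference_mean_value[OF C2 h square_uv])
  obtain s2 t2 where st2: "s2 \<in> {0..h}" "t2 \<in> {0..h}"
    and eq2: "f (q + h *\<^sub>R v + h *\<^sub>R u) - f (q + h *\<^sub>R v) - f (q + h *\<^sub>R u) + f q
                = h\<^sup>2 * Df (\<lambda>x. Df f x v) (q + s2 *\<^sub>R v + t2 *\<^sub>R u) u"
    by (rule second_difference_mean_value[OF C2 h square_vu])
  have "q + h *\<^sub>R v + h *\<^sub>R u = q + h *\<^sub>R u + h *\<^sub>R v"
    by (simp add: algebra_simps)
  then have "h\<^sup>2 * Df (\<lambda>x. Df f x u) (q + s1 *\<^sub>R u + t1 *\<^sub>R v) v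
      = h\<^sup>2 * Df (\<lambda>x. Df f x v) (q + s2 *\<^sub>R v + t2 *\<^sub>R u) u"
    using eq1 eq2 by (simp only:)
  then have "Df (\<lambda>x. Df f x u) (q + s1 *\<^sub>R u + t1 *\<^sub>R v) v = Df (\<lambda>x. Df f x v) (q + s2 *\<^sub>R v + t2 *\<^sub>R u) u"
    using h by simp
  then show ?thesis
    by (rule that[OF near[OF st1 refl] near[OF st2 add.commute]])
qed

lemma second_derivative_symmetric:
  fixes f :: "'a::euclidean_space \<Rightarrow> real"
  assumes U: "open U" "q \<in> U" and C2: "Ck_on 2 U f"
  shows "Df (\<lambda>x. Df f x u) q v = Df (\<lambda>x. Df f x v) q u"
proof -
  define A where "A x = Df (\<lambda>x. Df f x u) x v" for x
  define B where "B x = Df (\<lambda>x. Df f x v) x u" for x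
  have less: "\<bar>A q - B q\<bar> < 2 * e" if e: "e > 0" for e
  proof -
    have "isCont A q" "isCont B q"
      using Ck_on_2_D(3)[OF C2] U unfolding A_def B_def by (simp_all add: continuous_on_eq_continuous_at)
    then obtain dA dB where dA: "dA > 0" "\<forall>x. dist x q < dA \<longrightarrow> dist (A x) (A q) < e"
      and dB: "dB > 0" "\<forall>x. dist x q < dB \<longrightarrow> dist (B x) (B q) < e"
      using e unfolding continuous_at_eps_delta by blast
    obtain dU where dU: "dU > 0" "ball q dU \<subseteq> U"
      using U openE by blast
    define d where "d = min dU (min dA dB)"
    have "d > 0" "ball q d \<subseteq> U"
      using dA dB dU by (auto simp: d_def)
    then obtain z1 z2 where z: "z1 \<in> ball q d" "z2 \<in> ball q d" and AB: "A z1 = B z2"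
      using mixed_derivatives_meet_in_ball[OF C2] unfolding A_def B_def by metis
    then have "\<bar>A z1 - A q\<bar> < e" "\<bar>B z2 - B q\<bar> < e"
      using dA dB by (auto simp: d_def dist_commute dist_real_def)
    then show ?thesis
      using AB by linarith
  qed
  have "A q = B q"
  proof (rule ccontr)
    assume "A q \<noteq> B q"
    then show False
      using less[of "\<bar>A q - B q\<bar> / 2"] by simp
  qed
  then show ?thesis
    unfolding A_def B_def .
qed

lemma vf_apply_eqI:
  assumes "(f has_derivative f') (at q)"
  shows "vf_apply X f q = f' (X q)"
  using frechet_derivative_at[OF assms] by (simp add: vf_apply_def)

lemma vf_apply_cong:
  assumes U: "open U" "q \<in> U" and eq: "\<And>z. z \<in> U \<Longrightarrow> f z = g z"
  shows "vf_apply X f q = vf_apply X g q"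
proof -
  have "(f has_derivative f') (at q) \<longleftrightarrow> (g has_derivative f') (at q)" for f'
  proof
    assume "(f has_derivative f') (at q)"
    then show "(g has_derivative f') (at q)"
      by (rule has_derivative_transform_within_open[OF _ U]) (simp add: eq)
  next
    assume "(g has_derivative f') (at q)"
    then show "(f has_derivative f') (at q)"
      by (rule has_derivative_transform_within_open[OF _ U]) (simp add: eq)
  qed
  then show ?thesis
    unfolding vf_apply_def frechet_derivative_def by simp
qed

lemma has_derivative_vf_apply:
  fixes f :: "'a::euclidean_space \<Rightarrow> real"
  assumes U: "open U" "q \<in> U" and C2: "Ck_on 2 U f" and X: "X differentiable (at q)"
  shows "(vf_apply X f has_derivative (\<lambda>w. Df f q (Df X q w) + Df (\<lambda>x. Df f x (X q)) q w)) (at q)"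
proof -
  have expand: "Df f x v = (\<Sum>i\<in>Basis. (v \<bullet> i) * Df f x i)" if "x \<in> U" for x v
  proof -
    have "linear (Df f x)"
      using Ck_on_2_D(1)[OF C2] that by (simp add: linear_frechet_derivative)
    then have "Df f x (\<Sum>i\<in>Basis. (v \<bullet> i) *\<^sub>R i) = (\<Sum>i\<in>Basis. (v \<bullet> i) * Df f x i)"
      by (simp add: real_vector.linear_sum linear_cmul)
    then show ?thesis
      by (simp add: euclidean_representation)
  qed
  have dX: "(X has_derivative Df X q) (at q)"
    using X frechet_derivative_works by blast
  have dfi: "((\<lambda>x. Df f x i) has_derivative Df (\<lambda>x. Df f x i) q) (at q)" for i
    using Ck_on_2_D(2)[OF C2] U(2) frechet_derivative_works by blast
  have "((\<lambda>x. \<Sum>i\<in>Basis. (X x \<bullet> i) * Df f x i) has_derivative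
      (\<lambda>w. \<Sum>i\<in>Basis. (X q \<bullet> i) * Df (\<lambda>x. Df f x i) q w + (Df X q w \<bullet> i) * Df f q i)) (at q)"
    by (intro has_derivative_sum has_derivative_mult dfi
          bounded_linear.has_derivative[OF bounded_linear_inner_left dX])
  then have dvf: "(vf_apply X f has_derivative
      (\<lambda>w. \<Sum>i\<in>Basis. (X q \<bullet> i) * Df (\<lambda>x. Df f x i) q w + (Df X q w \<bullet> i) * Df f q i)) (at q)"
    by (rule has_derivative_transform_within_open[OF _ U]) (simp add: vf_apply_def expand[symmetric])
  have "((\<lambda>x. \<Sum>i\<in>Basis. (X q \<bullet> i) * Df f x i) has_derivative
      (\<lambda>w. \<Sum>i\<in>Basis. (X q \<bullet> i) * Df (\<lambda>x. Df f x i) q w)) (at q)"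
    by (intro has_derivative_sum has_derivative_mult_right dfi)
  then have "((\<lambda>x. Df f x (X q)) has_derivative
      (\<lambda>w. \<Sum>i\<in>Basis. (X q \<bullet> i) * Df (\<lambda>x. Df f x i) q w)) (at q)"
    by (rule has_derivative_transform_within_open[OF _ U]) (simp add: expand[symmetric])
  then have D2: "Df (\<lambda>x. Df f x (X q)) q = (\<lambda>w. \<Sum>i\<in>Basis. (X q \<bullet> i) * Df (\<lambda>x. Df f x i) q w)"
    by (rule frechet_derivative_at[symmetric])
  show ?thesis
    using dvf by (rule has_derivative_eq_rhs) (simp add: fun_eq_iff D2 expand[OF U(2), of "Df X q _"] sum.distrib)
qed

lemma vf_apply_commute:
  fixes f :: "'a::euclidean_space \<Rightarrow> real"
  assumes U: "open U" "q \<in> U" and C2: "Ck_on 2 U f"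
    and X: "X differentiable (at q)" and Y: "Y differentiable (at q)"
    and XY: "commuting_on U X Y"
  shows "vf_apply X (vf_apply Y f) q = vf_apply Y (vf_apply X f) q"
proof -
  have "vf_apply X (vf_apply Y f) q = Df f q (Df Y q (X q)) + Df (\<lambda>x. Df f x (Y q)) q (X q)"
    using vf_apply_eqI[OF has_derivative_vf_apply[OF U C2 Y]] .
  also have "\<dots> = Df f q (Df X q (Y q)) + Df (\<lambda>x. Df f x (X q)) q (Y q)"
    using XY U(2) second_derivative_symmetric[OF U C2, of "Y q" "X q"] by (simp add: commuting_on_def)
  also have "\<dots> = vf_apply Y (vf_apply X f) q"
    using vf_apply_eqI[OF has_derivative_vf_apply[OF U C2 X]] by simp
  finally show ?thesis .
qed

lemma vf_apply_add:
  assumes "f differentiable (at q)" "g differentiable (at q)"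
  shows "vf_apply X (\<lambda>z. f z + g z) q = vf_apply X f q + vf_apply X g q"
  using vf_apply_eqI[OF has_derivative_add[OF assms[unfolded frechet_derivative_works]]]
  by (simp add: vf_apply_def)

lemma vf_apply_diff:
  assumes "f differentiable (at q)" "g differentiable (at q)"
  shows "vf_apply X (\<lambda>z. f z - g z) q = vf_apply X f q - vf_apply X g q"
  using vf_apply_eqI[OF has_derivative_diff[OF assms[unfolded frechet_derivative_works]]]
  by (simp add: vf_apply_def)

lemma vf_apply_minus:
  assumes "f differentiable (at q)"
  shows "vf_apply X (\<lambda>z. - f z) q = - vf_apply X f q"
  using vf_apply_eqI[OF has_derivative_minus[OF assms[unfolded frechet_derivative_works]]]
  by (simp add: vf_apply_def)

lemma vf_apply_mult:
  fixes f g :: "'a::euclidean_space \<Rightarrow> real"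
  assumes "f differentiable (at q)" "g differentiable (at q)"
  shows "vf_apply X (\<lambda>z. f z * g z) q = vf_apply X f q * g q + f q * vf_apply X g q"
  using vf_apply_eqI[OF has_derivative_mult[OF assms[unfolded frechet_derivative_works]]]
  by (simp add: vf_apply_def)

lemma inner_sum_Basis_enum:
  fixes b :: "nat \<Rightarrow> 'a::euclidean_space"
  assumes b: "bij_betw b {..<DIM('a)} Basis" and k: "k < DIM('a)"
  shows "(\<Sum>j<DIM('a). c j *\<^sub>R b j) \<bullet> b k = c k"
proof -
  have "b j \<bullet> b k = (if j = k then 1 else 0)" if "j < DIM('a)" for j
  proof -
    have "b j \<in> Basis" "b k \<in> Basis" "b j = b k \<longleftrightarrow> j = k"
      using b that k unfolding bij_betw_def inj_on_def by auto
    then show ?thesis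
      by (simp add: inner_Basis)
  qed
  then have "(\<Sum>j<DIM('a). c j * (b j \<bullet> b k)) = (\<Sum>j<DIM('a). if j = k then c j else 0)"
    by (intro sum.cong) auto
  then show ?thesis
    using k by (simp add: inner_sum_left)
qed

lemma independent_functionals_bij:
  fixes L :: "nat \<Rightarrow> 'a::euclidean_space \<Rightarrow> real" and b :: "nat \<Rightarrow> 'a"
  assumes lin: "\<forall>j<DIM('a). linear (L j)"
    and indep: "\<forall>c. (\<forall>v. (\<Sum>j<DIM('a). c j * L j v) = 0) \<longrightarrow> (\<forall>j<DIM('a). c j = 0)"
    and b: "bij_betw b {..<DIM('a)} Basis"
  shows "bij (\<lambda>v. \<Sum>j<DIM('a). L j v *\<^sub>R b j)"
proof -
  define T where "T v = (\<Sum>j<DIM('a). L j v *\<^sub>R b j)" for v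
  have "linear T"
    unfolding T_def using lin
    by (intro linear_compose_sum) (auto intro!: linearI simp: linear_add linear_cmul scaleR_add_left)
  moreover have "surj T"
  proof (rule ccontr)
    assume "\<not> surj T"
    moreover have "span (range T) = range T"
      using \<open>linear T\<close> by (simp add: linear_subspace_image)
    ultimately have "span (range T) \<noteq> UNIV"
      by metis
    then have "dim (range T) < DIM('a)"
      using dim_eq_full[of "range T"] dim_subset_UNIV[of "range T"] by linarith
    then obtain u :: 'a where u: "u \<noteq> 0" "\<And>w. w \<in> span (range T) \<Longrightarrow> orthogonal u w"
      using orthogonal_to_subspace_exists by blast
    have "(\<Sum>j<DIM('a). (u \<bullet> b j) * L j v) = 0" for v
      using u(2)[OF span_base[OF rangeI[of T v]]]
      by (simp add: orthogonal_def T_def inner_sum_right mult.commute)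
    then have "\<forall>j<DIM('a). u \<bullet> b j = 0"
      using indep[rule_format, of "\<lambda>j. u \<bullet> b j"] by blast
    then have "\<forall>i\<in>Basis. u \<bullet> i = 0"
      using b unfolding bij_betw_def by (metis imageE lessThan_iff)
    then show False
      using u(1) euclidean_all_zero_iff by blast
  qed
  ultimately show ?thesis
    unfolding T_def[abs_def] bij_def by (simp add: linear_surj_imp_inj)
qed

lemma indep_differentials_eq_0:
  fixes y :: "nat \<Rightarrow> 'a::euclidean_space \<Rightarrow> real"
  assumes indep: "indep_differentials y DIM('a) q"
    and diff: "\<forall>j<DIM('a). y j differentiable (at q)"
    and zero: "\<forall>j<DIM('a). Df (y j) q v = 0"
  shows "v = 0"
proof -
  obtain b :: "nat \<Rightarrow> 'a" where b: "bij_betw b {..<DIM('a)} Basis"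
    using ex_bij_betw_nat_finite[of "Basis::'a set"] by (auto simp: atLeast0LessThan)
  have lin: "\<forall>j<DIM('a). linear (Df (y j) q)"
    using diff linear_frechet_derivative by blast
  have "(\<lambda>v. \<Sum>j<DIM('a). Df (y j) q v *\<^sub>R b j) v = (\<lambda>v. \<Sum>j<DIM('a). Df (y j) q v *\<^sub>R b j) 0"
    using zero lin by (simp add: linear_0)
  then show ?thesis
    using independent_functionals_bij[OF lin _ b] indep
    unfolding indep_differentials_def bij_def inj_def by blast
qed

lemma coord_vec_eqI:
  fixes y :: "nat \<Rightarrow> 'a::euclidean_space \<Rightarrow> real"
  assumes indep: "indep_differentials y DIM('a) q"
    and diff: "\<forall>j<DIM('a). y j differentiable (at q)"
    and v: "\<forall>j<DIM('a). Df (y j) q v = (if j = i then 1 else 0)"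
  shows "coord_vec y DIM('a) i q = v"
  unfolding coord_vec_def
proof (rule the_equality)
  fix w assume w: "\<forall>j<DIM('a). Df (y j) q w = (if j = i then 1 else 0)"
  have "\<forall>j<DIM('a). Df (y j) q (w - v) = 0"
    using v w diff by (simp add: linear_diff linear_frechet_derivative)
  then show "w = v"
    using indep_differentials_eq_0[OF indep diff, of "w - v"] by simp
qed (use v in simp)

lemma vanishing_differentials_collinear:
  fixes y :: "nat \<Rightarrow> 'a::euclidean_space \<Rightarrow> real"
  assumes indep: "indep_differentials y DIM('a) q"
    and diff: "\<forall>j<DIM('a). y j differentiable (at q)"
    and w: "w \<noteq> 0" "\<forall>j<DIM('a). j \<noteq> i \<longrightarrow> Df (y j) q w = 0"
    and u: "\<forall>j<DIM('a). j \<noteq> i \<longrightarrow> Df (y j) q u = 0"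
  shows "\<exists>c. u = c *\<^sub>R w"
proof -
  have lin: "linear (Df (y j) q)" if "j < DIM('a)" for j
    using diff that linear_frechet_derivative by blast
  have wi: "Df (y i) q w \<noteq> 0"
    using w indep_differentials_eq_0[OF indep diff, of w] by metis
  define c where "c = Df (y i) q u / Df (y i) q w"
  have "Df (y j) q (u - c *\<^sub>R w) = 0" if "j < DIM('a)" for j
    using w(2) u lin[OF that] wi that by (cases "j = i") (auto simp: c_def linear_diff linear_cmul)
  then have "u - c *\<^sub>R w = 0"
    using indep_differentials_eq_0[OF indep diff] by blast
  then show ?thesis
    by auto
qed

definition coordinate_map :: "(nat \<Rightarrow> 'a \<Rightarrow> real) \<Rightarrow> (nat \<Rightarrow> 'a) \<Rightarrow> 'a \<Rightarrow> 'a::euclidean_space" where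
  "coordinate_map y b x = (\<Sum>j<DIM('a). y j x *\<^sub>R b j)"

lemma coordinate_map_derivative:
  fixes y :: "nat \<Rightarrow> 'a::euclidean_space \<Rightarrow> real" and b :: "nat \<Rightarrow> 'a"
  assumes C1: "\<forall>j<DIM('a). Ck_on 1 U (y j)"
  obtains f' :: "'a \<Rightarrow> 'a \<Rightarrow>\<^sub>L 'a" where
    "\<And>x. x \<in> U \<Longrightarrow> (coordinate_map y b has_derivative blinfun_apply (f' x)) (at x)"
    "continuous_on U f'"
    "\<And>x v. x \<in> U \<Longrightarrow> blinfun_apply (f' x) v = (\<Sum>j<DIM('a). Df (y j) x v *\<^sub>R b j)"
proof -
  define L where "L x v = (\<Sum>j<DIM('a). Df (y j) x v *\<^sub>R b j)" for x v
  have diff: "y j differentiable (at x)" if "j < DIM('a)" "x \<in> U" for j x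
    using Ck_on_1_D(1) C1 that by blast
  have "linear (L x)" if "x \<in> U" for x
    unfolding L_def using diff[OF _ that]
    by (intro linear_compose_sum)
      (auto intro!: linearI simp: linear_frechet_derivative linear_add linear_cmul scaleR_add_left)
  then have L: "blinfun_apply (Blinfun (L x)) = L x" if "x \<in> U" for x
    using that by (simp add: linear_conv_bounded_linear bounded_linear_Blinfun_apply)
  show ?thesis
  proof (rule that[of "\<lambda>x. Blinfun (L x)"])
    show "(coordinate_map y b has_derivative blinfun_apply (Blinfun (L x))) (at x)" if "x \<in> U" for x
      unfolding L[OF that] coordinate_map_def[abs_def] L_def
      by (intro has_derivative_sum has_derivative_scaleR_left) (use diff that frechet_derivative_works in blast)
    have "continuous_on U (\<lambda>x. L x i)" for i
      unfolding L_def using Ck_on_1_D(2) C1 by (intro continuous_intros) auto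
    then show "continuous_on U (\<lambda>x. Blinfun (L x))"
      by (intro continuous_on_blinfun_componentwise) (auto simp: L cong: continuous_on_cong)
    show "blinfun_apply (Blinfun (L x)) v = (\<Sum>j<DIM('a). Df (y j) x v *\<^sub>R b j)" if "x \<in> U" for x v
      using L[OF that] by (simp add: L_def)
  qed
qed

lemma local_coordinate_inverse:
  fixes y :: "nat \<Rightarrow> 'a::euclidean_space \<Rightarrow> real" and b :: "nat \<Rightarrow> 'a"
  assumes U: "open U" "p \<in> U" and C1: "\<forall>j<DIM('a). Ck_on 1 U (y j)"
    and indep: "indep_differentials y DIM('a) p"
    and b: "bij_betw b {..<DIM('a)} Basis"
  obtains V r g g' where "open V" "p \<in> V" "V \<subseteq> U"
    "\<And>x. x \<in> V \<Longrightarrow> coordinate_map y b x \<in> ball (coordinate_map y b p) r \<and> g (coordinate_map y b x) = x"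
    "\<And>z. z \<in> ball (coordinate_map y b p) r \<Longrightarrow> g z \<in> U \<and> (g has_derivative g' z) (at z) \<and>
        (\<forall>v. \<forall>j<DIM('a). Df (y j) (g z) (g' z v) = v \<bullet> b j)"
proof -
  let ?Phi = "coordinate_map y b"
  obtain f' where dPhi: "\<And>x. x \<in> U \<Longrightarrow> (?Phi has_derivative blinfun_apply (f' x)) (at x)"
    and cont: "continuous_on U f'"
    and f': "\<And>x v. x \<in> U \<Longrightarrow> blinfun_apply (f' x) v = (\<Sum>j<DIM('a). Df (y j) x v *\<^sub>R b j)"
    by (rule coordinate_map_derivative[OF C1]) (rule that)
  have "bij (blinfun_apply (f' p))"
    unfolding f'[OF U(2), abs_def] using indep C1 U(2) Ck_on_1_D(1)
    by (intro independent_functionals_bij[OF _ _ b])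
      (auto simp: indep_differentials_def linear_frechet_derivative)
  moreover have "linear (blinfun_apply (f' p))"
    by (rule bounded_linear.linear[OF blinfun.bounded_linear_right])
  ultimately obtain g0 where "linear g0" "g0 \<circ> blinfun_apply (f' p) = id"
    using real_vector.linear_injective_left_inverse unfolding bij_def by blast
  then have "Blinfun g0 o\<^sub>L f' p = id_blinfun"
    by (intro blinfun_eqI) (simp add: linear_conv_bounded_linear bounded_linear_Blinfun_apply fun_eq_iff)
  then obtain U' W g g' where U': "open U'" "U' \<subseteq> U" "p \<in> U'" "open W" "?Phi p \<in> W"
    and hom: "homeomorphism U' W ?Phi g"
    and dg: "\<And>z. z \<in> W \<Longrightarrow> (g has_derivative g' z) (at z)"
    and g': "\<And>z. z \<in> W \<Longrightarrow> g' z = inv (blinfun_apply (f' (g z)))"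
    and bij: "\<And>z. z \<in> W \<Longrightarrow> bij (blinfun_apply (f' (g z)))"
    using inverse_function_theorem[OF U(1) dPhi cont U(2)] by blast
  obtain r where r: "r > 0" "ball (?Phi p) r \<subseteq> W"
    using U'(4,5) openE by blast
  have gU: "g z \<in> U" if "z \<in> W" for z
    using hom that U'(2) unfolding homeomorphism_def by auto
  show ?thesis
  proof (rule that)
    show "open (U' \<inter> ?Phi -` ball (?Phi p) r)"
      using hom U'(1) by (intro continuous_open_preimage) (auto simp: homeomorphism_def)
    show "p \<in> U' \<inter> ?Phi -` ball (?Phi p) r" "U' \<inter> ?Phi -` ball (?Phi p) r \<subseteq> U"
      using U' r by (auto intro: centre_in_ball)
    show "?Phi x \<in> ball (?Phi p) r \<and> g (?Phi x) = x" if "x \<in> U' \<inter> ?Phi -` ball (?Phi p) r" for x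
      using hom that unfolding homeomorphism_def by auto
    fix z assume z: "z \<in> ball (?Phi p) r"
    have "Df (y j) (g z) (g' z v) = v \<bullet> b j" if "j < DIM('a)" for v j
    proof -
      have "blinfun_apply (f' (g z)) (g' z v) = v"
        using g' bij z r by (simp add: bij_def surj_f_inv_f subset_iff)
      then show ?thesis
        using inner_sum_Basis_enum[OF b that] f' gU z r by (metis subsetD)
    qed
    then show "g z \<in> U \<and> (g has_derivative g' z) (at z) \<and> (\<forall>v. \<forall>j<DIM('a). Df (y j) (g z) (g' z v) = v \<bullet> b j)"
      using gU dg z r by blast
  qed
qed

lemma coordinate_segment_paths:
  fixes y :: "nat \<Rightarrow> 'a::euclidean_space \<Rightarrow> real"
  assumes U: "open U" "p \<in> U" and C1: "\<forall>j<DIM('a). Ck_on 1 U (y j)"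
    and indep: "indep_differentials y DIM('a) p"
  obtains V where "open V" "p \<in> V" "V \<subseteq> U"
    "\<And>q q'. q \<in> V \<Longrightarrow> q' \<in> V \<Longrightarrow> \<exists>\<gamma> \<gamma>'. \<gamma> 0 = q \<and> \<gamma> 1 = q' \<and>
        (\<forall>t\<in>{0..1}. \<gamma> t \<in> U \<and> (\<gamma> has_vector_derivative \<gamma>' t) (at t within {0..1}) \<and>
           (\<forall>j<DIM('a). Df (y j) (\<gamma> t) (\<gamma>' t) = y j q' - y j q))"
proof -
  obtain b :: "nat \<Rightarrow> 'a" where b: "bij_betw b {..<DIM('a)} Basis"
    using ex_bij_betw_nat_finite[of "Basis::'a set"] by (auto simp: atLeast0LessThan)
  let ?Phi = "coordinate_map y b"
  obtain V r g g' where V: "open V" "p \<in> V" "V \<subseteq> U"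
    and inv: "\<And>x. x \<in> V \<Longrightarrow> ?Phi x \<in> ball (?Phi p) r \<and> g (?Phi x) = x"
    and g: "\<And>z. z \<in> ball (?Phi p) r \<Longrightarrow> g z \<in> U \<and> (g has_derivative g' z) (at z) \<and>
        (\<forall>v. \<forall>j<DIM('a). Df (y j) (g z) (g' z v) = v \<bullet> b j)"
    by (rule local_coordinate_inverse[OF U C1 indep b]) (rule that)
  show ?thesis
  proof (rule that[OF V])
    fix q q' assume q: "q \<in> V" and q': "q' \<in> V"
    define z where "z t = ?Phi q + t *\<^sub>R (?Phi q' - ?Phi q)" for t
    define \<gamma> where "\<gamma> t = g (z t)" for t
    define \<gamma>' where "\<gamma>' t = g' (z t) (?Phi q' - ?Phi q)" for t
    have z: "z t \<in> ball (?Phi p) r" if "t \<in> {0..1}" for t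
    proof -
      have "(1 - t) *\<^sub>R ?Phi q + t *\<^sub>R ?Phi q' \<in> ball (?Phi p) r"
        using inv[OF q] inv[OF q'] that by (intro convexD[OF convex_ball]) auto
      then show ?thesis
        by (simp add: z_def algebra_simps)
    qed
    have "\<gamma> 0 = q" "\<gamma> 1 = q'"
      using inv q q' by (simp_all add: \<gamma>_def z_def)
    moreover have "\<gamma> t \<in> U" if "t \<in> {0..1}" for t
      using g z[OF that] by (simp add: \<gamma>_def)
    moreover have "(\<gamma> has_vector_derivative \<gamma>' t) (at t within {0..1})" if "t \<in> {0..1}" for t
      using has_derivative_along_line[of g "g' (z t)"] g[OF z[OF that]]
      unfolding has_vector_derivative_def \<gamma>_def[abs_def] \<gamma>'_def z_def by blast
    moreover have "Df (y j) (\<gamma> t) (\<gamma>' t) = y j q' - y j q" if "t \<in> {0..1}" "j < DIM('a)" for t j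
    proof -
      have "?Phi q' - ?Phi q = (\<Sum>j<DIM('a). (y j q' - y j q) *\<^sub>R b j)"
        by (simp add: coordinate_map_def sum_subtractf scaleR_diff_left)
      then show ?thesis
        using g[OF z[OF that(1)]] inner_sum_Basis_enum[OF b that(2)] that(2)
        by (simp add: \<gamma>_def \<gamma>'_def)
    qed
    ultimately show "\<exists>\<gamma> \<gamma>'. \<gamma> 0 = q \<and> \<gamma> 1 = q' \<and>
        (\<forall>t\<in>{0..1}. \<gamma> t \<in> U \<and> (\<gamma> has_vector_derivative \<gamma>' t) (at t within {0..1}) \<and>
           (\<forall>j<DIM('a). Df (y j) (\<gamma> t) (\<gamma>' t) = y j q' - y j q))"
      by blast
  qed
qed

lemma locally_independent_of_coordinate:
  fixes y :: "nat \<Rightarrow> 'a::euclidean_space \<Rightarrow> real" and f :: "'a \<Rightarrow> 'b::real_normed_vector"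
  assumes U: "open U" "p \<in> U" and C1: "\<forall>j<DIM('a). Ck_on 1 U (y j)"
    and indep: "indep_differentials y DIM('a) p"
    and f: "\<And>x. x \<in> U \<Longrightarrow> (f has_derivative f' x) (at x)"
    and kernel: "\<And>x u. x \<in> U \<Longrightarrow> \<forall>j<DIM('a). j \<noteq> i \<longrightarrow> Df (y j) x u = 0 \<Longrightarrow> f' x u = 0"
  shows "\<exists>V. open V \<and> p \<in> V \<and> V \<subseteq> U \<and>
           (\<forall>q\<in>V. \<forall>q'\<in>V. (\<forall>j<DIM('a). j \<noteq> i \<longrightarrow> y j q = y j q') \<longrightarrow> f q = f q')"
proof -
  obtain V where V: "open V" "p \<in> V" "V \<subseteq> U"
    and paths: "\<And>q q'. q \<in> V \<Longrightarrow> q' \<in> V \<Longrightarrow> \<exists>\<gamma> \<gamma>'. \<gamma> 0 = q \<and> \<gamma> 1 = q' \<and>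
        (\<forall>t\<in>{0..1}. \<gamma> t \<in> U \<and> (\<gamma> has_vector_derivative \<gamma>' t) (at t within {0..1}) \<and>
           (\<forall>j<DIM('a). Df (y j) (\<gamma> t) (\<gamma>' t) = y j q' - y j q))"
    by (rule coordinate_segment_paths[OF U C1 indep]) (rule that)
  have "f q = f q'"
    if q: "q \<in> V" "q' \<in> V" and same: "\<forall>j<DIM('a). j \<noteq> i \<longrightarrow> y j q = y j q'" for q q'
  proof -
    obtain \<gamma> \<gamma>' where ends: "\<gamma> 0 = q" "\<gamma> 1 = q'"
      and \<gamma>: "\<And>t. t \<in> {0..1} \<Longrightarrow> \<gamma> t \<in> U \<and> (\<gamma> has_vector_derivative \<gamma>' t) (at t within {0..1}) \<and>
           (\<forall>j<DIM('a). Df (y j) (\<gamma> t) (\<gamma>' t) = y j q' - y j q)"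
      using paths[OF q] by blast
    have deriv0: "((f \<circ> \<gamma>) has_derivative (\<lambda>s. 0)) (at t within {0..1})" if t: "t \<in> {0..1}" for t
    proof -
      have "f' (\<gamma> t) (\<gamma>' t) = 0"
        using \<gamma>[OF t] same by (intro kernel) auto
      moreover have "linear (f' (\<gamma> t))"
        using f \<gamma>[OF t] has_derivative_linear by blast
      ultimately show ?thesis
        using has_derivative_compose[OF \<gamma>[OF t, THEN conjunct2, THEN conjunct1, unfolded has_vector_derivative_def]
            f[of "\<gamma> t"]] \<gamma>[OF t]
        by (simp add: o_def linear_cmul)
    qed
    have "(f \<circ> \<gamma>) 0 = (f \<circ> \<gamma>) 1"
      by (rule has_derivative_zero_unique[of "{0..1}" "f \<circ> \<gamma>"]) (simp_all add: deriv0)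
    then show ?thesis
      using ends by simp
  qed
  then show ?thesis
    using V by blast
qed

(* y ia and y ib are the two roots, in either order; the separation relations are the form the
   Kowalewski conditions take once F and G are expressed through the roots. *)
locale separated_coordinates =
  fixes U :: "'a::euclidean_space set" and Xp Xs :: "'a \<Rightarrow> 'a"
    and y :: "nat \<Rightarrow> 'a \<Rightarrow> real" and ia ib :: nat
  assumes open_U: "open U"
    and X_differentiable: "\<forall>q\<in>U. Xp differentiable (at q) \<and> Xs differentiable (at q)"
    and X_independent: "\<forall>q\<in>U. \<forall>c d. c *\<^sub>R Xp q + d *\<^sub>R Xs q = 0 \<longrightarrow> c = 0 \<and> d = 0"
    and X_commute: "commuting_on U Xp Xs"
    and C2_y: "\<forall>j<DIM('a). Ck_on 2 U (y j)"
    and ia: "ia < DIM('a)" and ib: "ib < DIM('a)"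
    and integrals: "\<forall>j<DIM('a). j \<noteq> ia \<longrightarrow> j \<noteq> ib \<longrightarrow>
                      (\<forall>q\<in>U. vf_apply Xp (y j) q = 0 \<and> vf_apply Xs (y j) q = 0)"
    and coordinates: "\<forall>q\<in>U. indep_differentials y DIM('a) q"
    and separated_a: "\<forall>q\<in>U. vf_apply Xs (y ia) q = - y ib q * vf_apply Xp (y ia) q"
    and separated_b: "\<forall>q\<in>U. vf_apply Xs (y ib) q = - y ia q * vf_apply Xp (y ib) q"
begin

definition psi :: "'a \<Rightarrow> real" where
  "psi q = vf_apply Xs (y ia) q + y ia q * vf_apply Xp (y ia) q"

lemma y_differentiable: "j < DIM('a) \<Longrightarrow> q \<in> U \<Longrightarrow> y j differentiable (at q)"
  using C2_y Ck_on_2_D(1) by blast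

lemma Df_y_along_combination:
  assumes "j < DIM('a)" "q \<in> U"
  shows "Df (y j) q (Xs q + c *\<^sub>R Xp q) = vf_apply Xs (y j) q + c * vf_apply Xp (y j) q"
  using linear_frechet_derivative[OF y_differentiable[OF assms]]
  by (simp add: vf_apply_def linear_add linear_cmul)

lemma Df_y_along_a:
  assumes "j < DIM('a)" "q \<in> U"
  shows "Df (y j) q (Xs q + y ia q *\<^sub>R Xp q) = (if j = ia then psi q else 0)"
  using Df_y_along_combination[OF assms] integrals separated_b assms by (auto simp: psi_def)

lemma Df_y_along_b:
  assumes "j < DIM('a)" "j \<noteq> ib" "q \<in> U"
  shows "Df (y j) q (Xs q + y ib q *\<^sub>R Xp q) = 0"
  using Df_y_along_combination[OF assms(1,3)] integrals separated_a assms by auto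

lemma combination_nonzero: "q \<in> U \<Longrightarrow> Xs q + c *\<^sub>R Xp q \<noteq> 0"
  using X_independent by (metis add.commute scaleR_one zero_neq_one)

lemma psi_nonzero:
  assumes q: "q \<in> U"
  shows "psi q \<noteq> 0"
proof
  assume "psi q = 0"
  then have "\<forall>j<DIM('a). Df (y j) q (Xs q + y ia q *\<^sub>R Xp q) = 0"
    using Df_y_along_a[OF _ q] by simp
  then show False
    using indep_differentials_eq_0 coordinates y_differentiable combination_nonzero q by blast
qed

lemma field_eq_psi_coord_vec:
  assumes q: "q \<in> U"
  shows "Xs q + y ia q *\<^sub>R Xp q = psi q *\<^sub>R coord_vec y DIM('a) ia q"
proof -
  have "coord_vec y DIM('a) ia q = (1 / psi q) *\<^sub>R (Xs q + y ia q *\<^sub>R Xp q)"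
    using coordinates q y_differentiable[OF _ q]
  proof (intro coord_vec_eqI allI impI)
    fix j assume "j < DIM('a)"
    then show "Df (y j) q ((1 / psi q) *\<^sub>R (Xs q + y ia q *\<^sub>R Xp q)) = (if j = ia then 1 else 0)"
      using Df_y_along_a[OF _ q] psi_nonzero[OF q] linear_frechet_derivative[OF y_differentiable[OF _ q]]
      by (simp add: linear_cmul)
  qed auto
  then show ?thesis
    using psi_nonzero[OF q] by simp
qed

lemma vf_apply_y_differentiable:
  "q \<in> U \<Longrightarrow> vf_apply Xp (y j) differentiable (at q) \<and> vf_apply Xs (y j) differentiable (at q)"
  if "j < DIM('a)"
  using has_derivative_vf_apply[OF open_U _ C2_y[rule_format, OF that]] X_differentiable
  unfolding differentiable_def by blast

lemma psi_differentiable: "q \<in> U \<Longrightarrow> psi differentiable (at q)"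
  using vf_apply_y_differentiable[OF ia] y_differentiable[OF ia]
  unfolding psi_def[abs_def] by simp

lemma vf_apply_psi_along_b:
  assumes x: "x \<in> U"
  shows "vf_apply Xs psi x + y ib x * vf_apply Xp psi x = 0"
proof -
  define P where "P = vf_apply Xp (y ia)"
  have diff: "y ia differentiable (at x)" "y ib differentiable (at x)" "P differentiable (at x)"
    using y_differentiable[OF ia x] y_differentiable[OF ib x] vf_apply_y_differentiable[OF ia x]
    by (simp_all add: P_def)
  have "vf_apply Xs P x = vf_apply Xp (vf_apply Xs (y ia)) x"
    unfolding P_def using X_differentiable X_commute x
    by (intro vf_apply_commute[OF open_U x C2_y[rule_format, OF ia], symmetric]) auto
  also have "\<dots> = vf_apply Xp (\<lambda>z. - y ib z * P z) x"
    using separated_a by (intro vf_apply_cong[OF open_U x]) (simp add: P_def)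
  also have "\<dots> = - vf_apply Xp (y ib) x * P x - y ib x * vf_apply Xp P x"
    using diff by (simp add: vf_apply_mult vf_apply_minus)
  finally have XsP: "vf_apply Xs P x = - vf_apply Xp (y ib) x * P x - y ib x * vf_apply Xp P x" .
  have psi_X: "vf_apply X psi x
      = (vf_apply X (y ia) x - vf_apply X (y ib) x) * P x + (y ia x - y ib x) * vf_apply X P x" for X
  proof -
    have "vf_apply X psi x = vf_apply X (\<lambda>z. (y ia z - y ib z) * P z) x"
      using separated_a by (intro vf_apply_cong[OF open_U x]) (simp add: psi_def P_def algebra_simps)
    then show ?thesis
      using diff by (simp add: vf_apply_mult vf_apply_diff)
  qed
  show ?thesis
    using separated_a separated_b x unfolding psi_X XsP by (simp add: P_def algebra_simps)
qed

(* The vectors annihilated by every dy_j with j \<noteq> ib are the multiples of X_s + y_ib X_p. *)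
lemma Df_psi_kernel:
  assumes x: "x \<in> U" and u: "\<forall>j<DIM('a). j \<noteq> ib \<longrightarrow> Df (y j) x u = 0"
  shows "Df psi x u = 0"
proof -
  obtain c where "u = c *\<^sub>R (Xs x + y ib x *\<^sub>R Xp x)"
    using vanishing_differentials_collinear[OF coordinates[rule_format, OF x] _ combination_nonzero[OF x] _ u]
      Df_y_along_b[OF _ _ x] y_differentiable[OF _ x] by blast
  moreover have "linear (Df psi x)"
    using psi_differentiable[OF x] by (rule linear_frechet_derivative)
  ultimately have "Df psi x u = c * (vf_apply Xs psi x + y ib x * vf_apply Xp psi x)"
    by (simp add: vf_apply_def linear_add linear_cmul)
  then show ?thesis
    using vf_apply_psi_along_b[OF x] by simp
qed

lemma separating_coordinate:
  "\<exists>\<psi>. (\<forall>q\<in>U. Xs q + y ia q *\<^sub>R Xp q = \<psi> q *\<^sub>R coord_vec y DIM('a) ia q)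
      \<and> (\<forall>p\<in>U. \<exists>V. open V \<and> p \<in> V \<and> V \<subseteq> U \<and>
            (\<forall>q\<in>V. \<forall>q'\<in>V. (\<forall>j<DIM('a). j \<noteq> ib \<longrightarrow> y j q = y j q') \<longrightarrow> \<psi> q = \<psi> q'))"
proof (intro exI[of _ psi] conjI)
  show "\<forall>q\<in>U. Xs q + y ia q *\<^sub>R Xp q = psi q *\<^sub>R coord_vec y DIM('a) ia q"
    using field_eq_psi_coord_vec by blast
  have C1: "\<forall>j<DIM('a). Ck_on 1 U (y j)"
    using C2_y Ck_on_2_imp_Ck_on_1 by blast
  have psi_derivative: "(psi has_derivative Df psi x) (at x)" if "x \<in> U" for x
    using psi_differentiable[OF that] frechet_derivative_works by blast
  show "\<forall>p\<in>U. \<exists>V. open V \<and> p \<in> V \<and> V \<subseteq> U \<and>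
          (\<forall>q\<in>V. \<forall>q'\<in>V. (\<forall>j<DIM('a). j \<noteq> ib \<longrightarrow> y j q = y j q') \<longrightarrow> psi q = psi q')"
    using locally_independent_of_coordinate[OF open_U _ C1 coordinates[rule_format] psi_derivative Df_psi_kernel]
    by blast
qed

end

lemma quadratic_roots_coefficients:
  fixes e f g r s :: real
  assumes rs: "r \<noteq> s" and r: "e * r\<^sup>2 + f * r + g = 0" and s: "e * s\<^sup>2 + f * s + g = 0"
  shows "f = - (e * (r + s))" and "g = e * (r * s)"
proof -
  have "(r - s) * (e * (r + s) + f) = (e * r\<^sup>2 + f * r + g) - (e * s\<^sup>2 + f * s + g)"
    by (simp add: algebra_simps power2_eq_square)
  then show f: "f = - (e * (r + s))"
    using rs r s by simp
  show "g = e * (r * s)"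
    using r unfolding f by algebra
qed

lemma kowalewski_conditions_algebra:
  fixes E F G x1 x2 Es Ep Fs Fp Gs Gp s1 s2 p1 p2 :: real
  assumes E: "E \<noteq> 0" and x: "x1 \<noteq> x2"
    and F: "F = - (E * (x1 + x2))" and G: "G = E * (x1 * x2)"
    and Fs: "Fs = - (Es * (x1 + x2) + E * (s1 + s2))"
    and Fp: "Fp = - (Ep * (x1 + x2) + E * (p1 + p2))"
    and Gs: "Gs = Es * (x1 * x2) + E * (s1 * x2 + x1 * s2)"
    and Gp: "Gp = Ep * (x1 * x2) + E * (p1 * x2 + x1 * p2)"
    and k1: "E * Fs - F * Es = E * Gp - G * Ep"
    and k2: "E * Gs - G * Es = F * Gp - G * Fp"
  shows "s1 = - x2 * p1 \<and> s2 = - x1 * p2"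
proof -
  define a b where "a = s1 + x2 * p1" and "b = s2 + x1 * p2"
  have "E * Fs - F * Es - (E * Gp - G * Ep) = - (E * E * (a + b))"
    unfolding F G Fs Gp a_def b_def by algebra
  then have ab: "a + b = 0"
    using k1 E by simp
  have "E * Gs - G * Es - (F * Gp - G * Fp) = E * E * (x2 * a + x1 * b)"
    unfolding F G Gs Gp Fp a_def b_def by algebra
  then have "x2 * a + x1 * b = 0"
    using k2 E by simp
  then have "(x2 - x1) * a = 0"
    using ab by algebra
  then have "a = 0"
    using x by simp
  then show ?thesis
    using ab unfolding a_def b_def by algebra
qed

lemma kowalewski_separation:
  fixes E F G x1 x2 :: "'a::euclidean_space \<Rightarrow> real"
  assumes U: "open U" "q \<in> U"
    and diff: "E differentiable (at q)" "x1 differentiable (at q)" "x2 differentiable (at q)"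
    and root1: "\<forall>z\<in>U. E z * (x1 z)\<^sup>2 + F z * x1 z + G z = 0"
    and root2: "\<forall>z\<in>U. E z * (x2 z)\<^sup>2 + F z * x2 z + G z = 0"
    and distinct: "\<forall>z\<in>U. x1 z \<noteq> x2 z" and E: "E q \<noteq> 0"
    and kow1: "E q * vf_apply Xs F q - F q * vf_apply Xs E q = E q * vf_apply Xp G q - G q * vf_apply Xp E q"
    and kow2: "E q * vf_apply Xs G q - G q * vf_apply Xs E q = F q * vf_apply Xp G q - G q * vf_apply Xp F q"
  shows "vf_apply Xs x1 q = - x2 q * vf_apply Xp x1 q \<and> vf_apply Xs x2 q = - x1 q * vf_apply Xp x2 q"
proof -
  have F: "F z = - (E z * (x1 z + x2 z))" and G: "G z = E z * (x1 z * x2 z)" if "z \<in> U" for z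
    using quadratic_roots_coefficients[of "x1 z" "x2 z"] root1 root2 distinct that by auto
  have XF: "vf_apply X F q = - (vf_apply X E q * (x1 q + x2 q) + E q * (vf_apply X x1 q + vf_apply X x2 q))" for X
  proof -
    have "vf_apply X F q = vf_apply X (\<lambda>z. - (E z * (x1 z + x2 z))) q"
      using F by (rule vf_apply_cong[OF U])
    then show ?thesis
      using diff by (simp add: vf_apply_minus vf_apply_mult vf_apply_add)
  qed
  have XG: "vf_apply X G q = vf_apply X E q * (x1 q * x2 q) + E q * (vf_apply X x1 q * x2 q + x1 q * vf_apply X x2 q)" for X
  proof -
    have "vf_apply X G q = vf_apply X (\<lambda>z. E z * (x1 z * x2 z)) q"
      using G by (rule vf_apply_cong[OF U])
    then show ?thesis
      using diff by (simp add: vf_apply_mult)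
  qed
  show ?thesis
    using kowalewski_conditions_algebra[OF E distinct[rule_format, OF U(2)] F[OF U(2)] G[OF U(2)]
        XF XF XG XG kow1 kow2] .
qed

lemma coords_agree_iff:
  assumes "2 \<le> n"
  shows "(\<forall>j<n. j \<noteq> 1 \<longrightarrow> coords x1 x2 H j q = coords x1 x2 H j q')
           \<longleftrightarrow> x1 q = x1 q' \<and> (\<forall>k<n - 2. H k q = H k q')"
    and "(\<forall>j<n. j \<noteq> 0 \<longrightarrow> coords x1 x2 H j q = coords x1 x2 H j q')
           \<longleftrightarrow> x2 q = x2 q' \<and> (\<forall>k<n - 2. H k q = H k q')"
proof -
  have split: "(\<forall>j<n. j \<noteq> i \<longrightarrow> C j) \<longleftrightarrow> C (1 - i) \<and> (\<forall>k<n - 2. C (k + 2))"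
    if "i \<le> 1" for i and C :: "nat \<Rightarrow> bool"
  proof
    assume C: "\<forall>j<n. j \<noteq> i \<longrightarrow> C j"
    have "1 - i < n" "1 - i \<noteq> i"
      using that assms by arith+
    then show "C (1 - i) \<and> (\<forall>k<n - 2. C (k + 2))"
      using C that by auto
  next
    assume C: "C (1 - i) \<and> (\<forall>k<n - 2. C (k + 2))"
    show "\<forall>j<n. j \<noteq> i \<longrightarrow> C j"
    proof (intro allI impI)
      fix j assume "j < n" "j \<noteq> i"
      then have "j = 1 - i \<or> (j - 2 < n - 2 \<and> j = (j - 2) + 2)"
        using that by arith
      then show "C j"
        using C by metis
    qed
  qed
  show "(\<forall>j<n. j \<noteq> 1 \<longrightarrow> coords x1 x2 H j q = coords x1 x2 H j q')
           \<longleftrightarrow> x1 q = x1 q' \<and> (\<forall>k<n - 2. H k q = H k q')"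
    unfolding split[OF order_refl] by (simp add: coords_def)
  show "(\<forall>j<n. j \<noteq> 0 \<longrightarrow> coords x1 x2 H j q = coords x1 x2 H j q')
           \<longleftrightarrow> x2 q = x2 q' \<and> (\<forall>k<n - 2. H k q = H k q')"
    unfolding split[OF zero_le_one] by (simp add: coords_def)
qed

theorem proposition1:
  fixes U :: "'a::euclidean_space set"
    and Xp Xs :: "'a \<Rightarrow> 'a"
    and H :: "nat \<Rightarrow> 'a \<Rightarrow> real"
    and E F G x1 x2 :: "'a \<Rightarrow> real"
  assumes U_open: "open U"
    and dim: "DIM('a) \<ge> 2"
    and smooth_X: "smooth_on U Xp" "smooth_on U Xs"
    and independent_X: "\<forall>q\<in>U. \<forall>a b. a *\<^sub>R Xp q + b *\<^sub>R Xs q = 0 \<longrightarrow> a = 0 \<and> b = 0"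
    and commute: "commuting_on U Xp Xs"
    and smooth_H: "\<forall>k < DIM('a) - 2. smooth_on U (H k)"
    and integrals: "\<forall>k < DIM('a) - 2. \<forall>q\<in>U. vf_apply Xp (H k) q = 0 \<and> vf_apply Xs (H k) q = 0"
    and independent_H: "\<forall>q\<in>U. indep_differentials H (DIM('a) - 2) q"
    and smooth_EFG: "smooth_on U E" "smooth_on U F" "smooth_on U G"
    and kow1: "\<forall>q\<in>U. E q * vf_apply Xs F q - F q * vf_apply Xs E q
                     = E q * vf_apply Xp G q - G q * vf_apply Xp E q"
    and kow2: "\<forall>q\<in>U. E q * vf_apply Xs G q - G q * vf_apply Xs E q
                     = F q * vf_apply Xp G q - G q * vf_apply Xp F q"
    and E_nonzero: "\<forall>q\<in>U. E q \<noteq> 0"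
    and root1: "\<forall>q\<in>U. E q * (x1 q)\<^sup>2 + F q * x1 q + G q = 0"
    and root2: "\<forall>q\<in>U. E q * (x2 q)\<^sup>2 + F q * x2 q + G q = 0"
    and distinct_roots: "\<forall>q\<in>U. x1 q \<noteq> x2 q"
    and smooth_roots: "smooth_on U x1" "smooth_on U x2"
    and coordinate_system: "\<forall>q\<in>U. indep_differentials (coords x1 x2 H) DIM('a) q"
  shows "(\<exists>\<psi>1. (\<forall>q\<in>U. Xs q + x1 q *\<^sub>R Xp q = \<psi>1 q *\<^sub>R coord_vec (coords x1 x2 H) DIM('a) 0 q)
              \<and> (\<forall>p\<in>U. \<exists>V. open V \<and> p \<in> V \<and> V \<subseteq> U \<and>
                   (\<forall>q\<in>V. \<forall>q'\<in>V. x1 q = x1 q' \<and> (\<forall>k < DIM('a) - 2. H k q = H k q')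
                      \<longrightarrow> \<psi>1 q = \<psi>1 q')))
       \<and> (\<exists>\<psi>2. (\<forall>q\<in>U. Xs q + x2 q *\<^sub>R Xp q = \<psi>2 q *\<^sub>R coord_vec (coords x1 x2 H) DIM('a) 1 q)
              \<and> (\<forall>p\<in>U. \<exists>V. open V \<and> p \<in> V \<and> V \<subseteq> U \<and>
                   (\<forall>q\<in>V. \<forall>q'\<in>V. x2 q = x2 q' \<and> (\<forall>k < DIM('a) - 2. H k q = H k q')
                      \<longrightarrow> \<psi>2 q = \<psi>2 q')))"
proof -
  have Ck: "Ck_on k U f" if "smooth_on U f" for f :: "'a \<Rightarrow> 'b::real_normed_vector" and k
    using that by (simp add: smooth_on_def)
  have diff: "f differentiable (at q)" if "smooth_on U f" "q \<in> U" for f :: "'a \<Rightarrow> 'b::real_normed_vector" and q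
    using Ck[OF that(1), of 1] that(2) by simp
  have separated: "vf_apply Xs x1 q = - x2 q * vf_apply Xp x1 q \<and> vf_apply Xs x2 q = - x1 q * vf_apply Xp x2 q"
    if "q \<in> U" for q
    using kowalewski_separation[OF U_open that diff[OF smooth_EFG(1) that] diff[OF smooth_roots(1) that]
        diff[OF smooth_roots(2) that] root1 root2 distinct_roots] E_nonzero kow1 kow2 that by blast
  have coords_roots: "coords x1 x2 H 0 = x1" "coords x1 x2 H 1 = x2" "coords x1 x2 H (Suc 0) = x2"
    by (simp_all add: coords_def)
  have y_assms: "\<forall>j<DIM('a). Ck_on 2 U (coords x1 x2 H j)"
    "\<forall>j<DIM('a). j \<noteq> 0 \<longrightarrow> j \<noteq> 1 \<longrightarrow>
       (\<forall>q\<in>U. vf_apply Xp (coords x1 x2 H j) q = 0 \<and> vf_apply Xs (coords x1 x2 H j) q = 0)"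
    using Ck smooth_H smooth_roots integrals by (auto simp: coords_def)
  interpret first: separated_coordinates U Xp Xs "coords x1 x2 H" 0 1
    using U_open smooth_X diff independent_X commute y_assms dim coordinate_system separated
    by unfold_locales (auto simp: coords_roots)
  interpret second: separated_coordinates U Xp Xs "coords x1 x2 H" 1 0
    using U_open smooth_X diff independent_X commute y_assms dim coordinate_system separated
    by unfold_locales (auto simp: coords_roots)
  show ?thesis
    using first.separating_coordinate second.separating_coordinate
    unfolding coords_roots coords_agree_iff[OF dim] by (rule conjI)
qed

end
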